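(* Let $n,k\geq1$. The dimension of the tropical RBM model $TM^k_n$ equals the maximum rank of a $2^n\times(nk+n+k)$ matrix of the form $\mathcal{A}=(A\mid A_{C_1}\mid A_{C_2}\mid\cdots\mid A_{C_k})$, where the maximum is taken over all choices of $k$ slicings $C_1,\dots,C_k$ of the $n$-cube.
   Context: Fix an ordering of $\{0,1\}^n$ indexing coordinates of $\mathbb{R}^{2^n}$ and matrix rows. The tropical morphism $\Phi:\mathbb{R}^{nk+n+k}\to\mathbb{TP}^{2^n-1}=\mathbb{R}^{2^n}/\mathbb{R}(1,\dots,1)$ sends $(W,b,c)\in\mathbb{R}^{k\times n}\times\mathbb{R}^n\times\mathbb{R}^k$ to the class of $(q(v))_{v\in\{0,1\}^n}$, $q(v)=\max_{h\in\{0,1\}^k}\{h^{\top}Wv+b^{\top}v+c^{\top}h\}$. The tropical RBM model $TM^k_n$ is the image of $\Phi$; it is a finite union of polyhedral cones and its dimension is the maximum dimension of a cone contained in it. A subset $C\subseteq\{0,1\}^n$ is a slicing of the $n$-cube if some affine hyperplane has all vertices of $C$ strictly on its positive side and all other vertices of $\{0,1\}^n$ strictly on its negative side. $A$ is the $2^n\times n$ matrix whose row indexed by $v$ is $v$; for a slicing $C$, $A_C$ is the $2^n\times(n+1)$ matrix whose row indexed by $v\in C$ is $(1,v)$ and whose other rows are zero.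
   Formalization: The tropical RBM model $TM^k_n$ is the image of $\Phi$ in $\mathbb{R}^{2^n}$ itself, not its class in $\mathbb{TP}^{2^n-1}=\mathbb{R}^{2^n}/\mathbb{R}(1,\dots,1)$, and its dimension is measured there. The statement above fails without it. *)

theory Defs
  imports "HOL-Analysis.Analysis"
begin

text \<open>The visible units are indexed by a finite type 'n (so n = CARD('n)),
 the hidden units by a finite type 'k (so k = CARD('k)). A vertex v of the n-cube {0,1}^n
 is identified with the set of coordinates where it equals 1, i.e. v :: 'n set; likewise
 h :: 'k set.\<close>

text \<open>The tropical morphism Phi: (W,b,c) maps to (q(v))_v with
 q(v) = max over h of h^T W v + b^T v + c^T h.\<close>
definition rbm_trop :: "('k::finite \<Rightarrow> 'n::finite \<Rightarrow> real) \<Rightarrow> ('n \<Rightarrow> real) \<Rightarrow> ('k \<Rightarrow> real)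
    \<Rightarrow> real ^ ('n set)" where
  "rbm_trop W b c = (\<chi> v. Max {(\<Sum>i\<in>h. \<Sum>j\<in>v. W i j) + (\<Sum>j\<in>v. b j) + (\<Sum>i\<in>h. c i) | h. True})"

definition tropical_RBM :: "'k::finite itself \<Rightarrow> (real ^ ('n::finite set)) set" where
  "tropical_RBM (_ :: 'k itself) = range (\<lambda>(W :: 'k \<Rightarrow> 'n \<Rightarrow> real, b, c). rbm_trop W b c)"

definition polyhedral_cone :: "'a::euclidean_space set \<Rightarrow> bool" where
  "polyhedral_cone K \<longleftrightarrow> polyhedron K \<and> cone K"

definition cone_dimension :: "'a::euclidean_space set \<Rightarrow> nat" where
  "cone_dimension S = Max {dim K | K. polyhedral_cone K \<and> K \<subseteq> S}"

definition slicing :: "'n::finite set set \<Rightarrow> bool" where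
  "slicing C \<longleftrightarrow> (\<exists>(a :: 'n \<Rightarrow> real) a0. (\<exists>j. a j \<noteq> 0) \<and>
      (\<forall>v. (v \<in> C \<longrightarrow> a0 + (\<Sum>j\<in>v. a j) > 0) \<and> (v \<notin> C \<longrightarrow> a0 + (\<Sum>j\<in>v. a j) < 0)))"

text \<open>The 2^n x (nk+n+k) matrix (A | A_C1 | ... | A_Ck). Columns are indexed by
 Inl j (column j of A) and Inr (i, None) / Inr (i, Some j) (the constant column and
 column j of the v-part of A_{C_i}).\<close>
definition rbm_matrix :: "('k::finite \<Rightarrow> 'n::finite set set) \<Rightarrow> real ^ ('n + 'k \<times> 'n option) ^ ('n set)" where
  "rbm_matrix C = (\<chi> v. \<chi> col. (case col of
      Inl j \<Rightarrow> (if j \<in> v then 1 else 0)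
    | Inr (i, None) \<Rightarrow> (if v \<in> C i then 1 else 0)
    | Inr (i, Some j) \<Rightarrow> (if v \<in> C i \<and> j \<in> v then 1 else 0)))"

end

theory Submission
  imports Defs
begin

text \<open>
Write the parameters (W, b, c) as one vector x indexed by the columns of rbm_matrix, and let C_i
be the set of visible states on which hidden unit i receives positive input c_i + W_i v. Then the
maximum over h in q(v) is attained by switching on exactly the units with positive input, so
Phi(x) = rbm_matrix C *v x, and every C_i is a slicing. Hence the model is covered by the finitely
many column spaces of the matrices rbm_matrix C; a polyhedral cone inside it is convex, so it lies
in a single column space, and its dimension is at most the corresponding rank. Conversely, for
slicings C_1, ..., C_k the parameters inducing exactly this activation pattern form a nonempty open
convex cone on which Phi is the linear map rbm_matrix C; its image contains a polyhedral cone
spanning the whole column space.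
\<close>

lemma Max_range_sum:
  fixes a :: "'k::finite \<Rightarrow> real"
  shows "Max (range (sum a)) = sum a {i. 0 < a i}"
proof (rule Max_eqI)
  fix y assume "y \<in> range (sum a)"
  then obtain h where y: "y = sum a h" by blast
  have "sum a h = sum a (h \<inter> {i. 0 < a i}) + sum a (h - {i. 0 < a i})"
    by (metis finite sum.Int_Diff)
  also have "\<dots> \<le> sum a {i. 0 < a i} + 0"
    by (intro add_mono sum_mono2 sum_nonpos) auto
  finally show "y \<le> sum a {i. 0 < a i}" by (simp add: y)
qed auto

lemma finite_Collect_dim:
  "finite {dim K | K :: 'a::euclidean_space set. P K}"
proof -
  have "{dim K | K :: 'a set. P K} \<subseteq> {..DIM('a)}"
    using dim_subset_UNIV by blast
  then show ?thesis by (rule finite_subset) simp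
qed

lemma Max_subset_cofinal_eq:
  fixes A B :: "'a::linorder set"
  assumes "finite B" "A \<noteq> {}" "A \<subseteq> B" "\<forall>b\<in>B. \<exists>a\<in>A. b \<le> a"
  shows "Max B = Max A"
proof (rule antisym)
  have "finite A" using assms(1,3) by (rule finite_subset[rotated])
  obtain a where "a \<in> A" "Max B \<le> a" using assms(1-4) Max_in by blast
  then show "Max B \<le> Max A" using \<open>finite A\<close> by (meson Max_ge order_trans)
qed (use assms Max_mono in auto)

lemma subspace_two_points_of_line:
  assumes "subspace S" "t \<noteq> u"
    and "(1 - t) *\<^sub>R x + t *\<^sub>R y \<in> S" "(1 - u) *\<^sub>R x + u *\<^sub>R y \<in> S"
  shows "x \<in> S \<and> y \<in> S"
proof -
  have "((1 - t) *\<^sub>R x + t *\<^sub>R y) - ((1 - u) *\<^sub>R x + u *\<^sub>R y) = (t - u) *\<^sub>R (y - x)"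
    by (simp add: algebra_simps)
  then have "(t - u) *\<^sub>R (y - x) \<in> S" using assms by (metis subspace_diff)
  then have "(1 / (t - u)) *\<^sub>R ((t - u) *\<^sub>R (y - x)) \<in> S" by (rule subspace_scale[OF assms(1)])
  then have diff: "y - x \<in> S" using assms(2) by simp
  have "x = ((1 - t) *\<^sub>R x + t *\<^sub>R y) - t *\<^sub>R (y - x)" by (simp add: algebra_simps)
  then have "x \<in> S" using assms(1,3) diff by (metis subspace_diff subspace_scale)
  moreover have "y = x + (y - x)" by simp
  ultimately show ?thesis using assms(1) diff by (metis subspace_add)
qed

lemma convex_subset_finite_Union_subspaces_pair:
  assumes "finite F" "\<forall>V\<in>F. subspace V" "convex K" "K \<subseteq> \<Union>F" "x \<in> K" "y \<in> K"
  shows "\<exists>V\<in>F. x \<in> V \<and> y \<in> V"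
proof -
  define z where "z t = (1 - t) *\<^sub>R x + t *\<^sub>R y" for t :: real
  have "z t \<in> K" if "t \<in> {0<..<1}" for t
    unfolding z_def using that by (intro convexD[OF assms(3,5,6)]) auto
  then have "\<exists>V\<in>F. z t \<in> V" if "t \<in> {0<..<1}" for t
    using that assms(4) by blast
  then obtain h where h: "\<And>t. t \<in> {0<..<1::real} \<Longrightarrow> h t \<in> F \<and> z t \<in> h t"
    by metis
  \<comment> \<open>Pigeonhole: infinitely many points of the open segment, finitely many subspaces.\<close>
  have "h ` {0<..<1} \<subseteq> F" using h by blast
  then have "finite (h ` {0<..<1})" using assms(1) by (rule finite_subset)
  then have "\<not> inj_on h {0<..<1::real}"
    by (metis finite_imageD infinite_Ioo zero_less_one)
  then obtain t u where tu: "t \<in> {0<..<1}" "u \<in> {0<..<1}" "t \<noteq> u" "h t = h u"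
    unfolding inj_on_def by blast
  have "x \<in> h t \<and> y \<in> h t"
    using h[OF tu(1)] h[OF tu(2)] assms(2) tu(3,4)
    by (intro subspace_two_points_of_line[of "h t" t u]) (auto simp: z_def)
  then show ?thesis using h[OF tu(1)] by blast
qed

lemma convex_subset_finite_Union_subspaces:
  assumes "finite F" "\<forall>V\<in>F. subspace V" "convex K" "K \<noteq> {}" "K \<subseteq> \<Union>F"
  shows "\<exists>V\<in>F. K \<subseteq> V"
  using assms
proof (induction F rule: finite_psubset_induct)
  case (psubset F)
  show ?case
  proof (cases "\<exists>V\<in>F. K \<subseteq> \<Union>(F - {V})")
    case True
    then obtain V where "V \<in> F" "K \<subseteq> \<Union>(F - {V})" by blast
    then show ?thesis using psubset.IH[of "F - {V}"] psubset.prems by blast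
  next
    case False
    \<comment> \<open>Each member then contains a point of K lying in no other member, and the points
      of two different members would have to share a member.\<close>
    then have own_point: "\<exists>x\<in>K. x \<notin> \<Union>(F - {V})" if "V \<in> F" for V using that by blast
    obtain V1 where V1: "V1 \<in> F" using psubset.prems(3,4) by blast
    show ?thesis
    proof (rule ccontr)
      assume "\<not> ?thesis"
      then obtain V2 where V2: "V2 \<in> F" "V2 \<noteq> V1" using V1 psubset.prems(4) by blast
      obtain x y where "x \<in> K" "x \<notin> \<Union>(F - {V1})" "y \<in> K" "y \<notin> \<Union>(F - {V2})"
        using own_point V1 V2(1) by metis
      then show False
        using convex_subset_finite_Union_subspaces_pair[OF psubset.hyps(1) psubset.prems(1,2,4)] V2(2)
        by blast
    qed
  qed
qed

lemma polyhedral_cone_in_linear_image: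
  fixes f :: "'a::euclidean_space \<Rightarrow> 'b::euclidean_space"
  assumes "linear f" "convex_cone Q" "span Q = UNIV"
  obtains K where "polyhedral_cone K" "K \<subseteq> f ` Q" "dim K = dim (range f)"
proof -
  obtain B where B: "B \<subseteq> Q" "independent B" "Q \<subseteq> span B" by (rule basis_exists)
  have "finite B" using B(2) independent_bound by blast
  define K where "K = convex_cone hull (f ` B)"
  have "polyhedral_cone K"
    unfolding polyhedral_cone_def K_def
    using polyhedron_convex_cone_hull \<open>finite B\<close> convex_cone_hull_mul by (auto simp: cone_def)
  moreover have "K \<subseteq> f ` Q"
    unfolding K_def using B(1) convex_cone_linear_image assms(1,2) by (intro hull_minimal) auto
  moreover have "span K = range f"
  proof -
    have "f ` B \<subseteq> K" unfolding K_def by (rule hull_subset)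
    moreover have "K \<subseteq> span (f ` B)"
      unfolding K_def by (intro hull_minimal span_superset convex_cone_span)
    ultimately have "span K = span (f ` B)" by (meson span_eq span_superset subset_trans)
    also have "\<dots> = f ` span B" using assms(1) by (rule linear_span_image)
    also have "span B = UNIV" using B(3) assms(3) by (metis span_mono span_span top.extremum_unique)
    finally show ?thesis .
  qed
  ultimately show ?thesis using that by (metis dim_span)
qed

definition rbm_param :: "('k::finite \<Rightarrow> 'n::finite \<Rightarrow> real) \<Rightarrow> ('n \<Rightarrow> real) \<Rightarrow> ('k \<Rightarrow> real)
    \<Rightarrow> real ^ ('n + 'k \<times> 'n option)" where
  "rbm_param W b c = (\<chi> col. case col of
      Inl j \<Rightarrow> b j | Inr (i, None) \<Rightarrow> c i | Inr (i, Some j) \<Rightarrow> W i j)"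

definition hidden_input :: "real ^ ('n::finite + 'k::finite \<times> 'n option) \<Rightarrow> 'k \<Rightarrow> 'n set \<Rightarrow> real" where
  "hidden_input x i v = x $ Inr (i, None) + (\<Sum>j\<in>v. x $ Inr (i, Some j))"

definition active_sets :: "real ^ ('n::finite + 'k::finite \<times> 'n option) \<Rightarrow> 'k \<Rightarrow> 'n set set" where
  "active_sets x i = {v. 0 < hidden_input x i v}"

definition pattern_params :: "('k::finite \<Rightarrow> 'n::finite set set) \<Rightarrow> (real ^ ('n + 'k \<times> 'n option)) set" where
  "pattern_params C =
     {x. \<forall>i v. if v \<in> C i then 0 < hidden_input x i v else hidden_input x i v < 0}"

lemma rbm_param_surj: "\<exists>W b c. rbm_param W b c = x"
  by (intro exI[of _ "\<lambda>i j. x $ Inr (i, Some j)"] exI[of _ "\<lambda>j. x $ Inl j"]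
      exI[of _ "\<lambda>i. x $ Inr (i, None)"])
     (auto simp: vec_eq_iff rbm_param_def split: sum.split option.split)

lemma hidden_input_rbm_param: "hidden_input (rbm_param W b c) i v = c i + (\<Sum>j\<in>v. W i j)"
  by (simp add: hidden_input_def rbm_param_def)

lemma linear_hidden_input: "linear (\<lambda>x. hidden_input x i v)"
  by (rule linearI) (simp_all add: hidden_input_def sum.distrib sum_distrib_left algebra_simps)

lemma rbm_matrix_nth:
  "rbm_matrix C $ v $ Inl j = of_bool (j \<in> v)"
  "rbm_matrix C $ v $ Inr (i, None) = of_bool (v \<in> C i)"
  "rbm_matrix C $ v $ Inr (i, Some j) = of_bool (v \<in> C i \<and> j \<in> v)"
  by (simp_all add: rbm_matrix_def)

lemma rbm_matrix_mult_nth: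
  "(rbm_matrix C *v x) $ v = (\<Sum>j\<in>v. x $ Inl j) + (\<Sum>i | v \<in> C i. hidden_input x i v)"
proof -
  have cols: "(UNIV :: ('n + 'k \<times> 'n option) set) = UNIV <+> (UNIV \<times> insert None (range Some))"
    by (simp add: UNIV_option_conv[symmetric])
  have hidden: "(\<Sum>t\<in>insert None (range Some). rbm_matrix C $ v $ Inr (i, t) * x $ Inr (i, t))
      = of_bool (v \<in> C i) * hidden_input x i v" for i
  proof -
    have "(\<Sum>t\<in>range Some. rbm_matrix C $ v $ Inr (i, t) * x $ Inr (i, t))
        = (\<Sum>j\<in>UNIV. of_bool (v \<in> C i \<and> j \<in> v) * x $ Inr (i, Some j))"
      by (subst sum.reindex) (auto simp: inj_on_def rbm_matrix_nth)
    then show ?thesis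
      by (cases "v \<in> C i") (simp_all add: rbm_matrix_nth hidden_input_def)
  qed
  have "(rbm_matrix C *v x) $ v = (\<Sum>col\<in>UNIV. rbm_matrix C $ v $ col * x $ col)"
    by (simp add: matrix_vector_mult_def)
  also have "\<dots> = (\<Sum>j\<in>UNIV. of_bool (j \<in> v) * x $ Inl j)
      + (\<Sum>i\<in>UNIV. \<Sum>t\<in>insert None (range Some). rbm_matrix C $ v $ Inr (i, t) * x $ Inr (i, t))"
    unfolding cols sum.Plus[OF finite finite] sum.cartesian_product by (simp add: rbm_matrix_nth)
  also have "\<dots> = (\<Sum>j\<in>UNIV. of_bool (j \<in> v) * x $ Inl j)
      + (\<Sum>i\<in>UNIV. of_bool (v \<in> C i) * hidden_input x i v)"
    by (simp only: hidden)
  finally show ?thesis by (simp add: Collect_conj_eq[symmetric])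
qed

lemma rbm_trop_eq_matrix_mult:
  fixes W :: "'k::finite \<Rightarrow> 'n::finite \<Rightarrow> real"
  shows "rbm_trop W b c = rbm_matrix (active_sets (rbm_param W b c)) *v rbm_param W b c"
proof (rule vec_eq_iff[THEN iffD2, rule_format])
  fix v :: "'n set"
  let ?x = "rbm_param W b c"
  have "{(\<Sum>i\<in>h. \<Sum>j\<in>v. W i j) + (\<Sum>j\<in>v. b j) + (\<Sum>i\<in>h. c i) | h. True}
      = (\<lambda>h. (\<Sum>i\<in>h. hidden_input ?x i v) + (\<Sum>j\<in>v. b j)) ` UNIV"
    by (simp add: hidden_input_rbm_param sum.distrib add_ac full_SetCompr_eq)
  then have "rbm_trop W b c $ v = Max (range (\<lambda>h. \<Sum>i\<in>h. hidden_input ?x i v)) + (\<Sum>j\<in>v. b j)"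
    by (simp add: rbm_trop_def Max_add_commute)
  then show "rbm_trop W b c $ v = (rbm_matrix (active_sets ?x) *v ?x) $ v"
    by (simp add: Max_range_sum rbm_matrix_mult_nth active_sets_def rbm_param_def)
qed

lemma tropical_RBM_eq_range:
  "tropical_RBM TYPE('k::finite)
     = range (\<lambda>x :: real ^ ('n::finite + 'k \<times> 'n option). rbm_matrix (active_sets x) *v x)"
  unfolding tropical_RBM_def rbm_trop_eq_matrix_mult
  by (auto simp: image_iff) (metis rbm_param_surj)

lemma slicing_Collect_affine_pos:
  fixes f :: "'n::finite \<Rightarrow> real"
  shows "slicing {v. 0 < c0 + sum f v}"
proof -
  \<comment> \<open>Lower the threshold by half the least positive value and perturb one coefficient
    by less than that, so that the normal vector becomes nonzero.\<close>
  define d where "d = Min (insert 1 {c0 + sum f v | v. 0 < c0 + sum f v})"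
  have "d \<in> insert 1 {c0 + sum f v | v. 0 < c0 + sum f v}"
    unfolding d_def by (rule Min_in) auto
  then have d_pos: "0 < d" by auto
  have d_le: "d \<le> c0 + sum f v" if "0 < c0 + sum f v" for v
    unfolding d_def using that by (intro Min_le) auto
  define j0 :: 'n where "j0 = undefined"
  obtain e where e: "0 < e" "e \<le> d / 4" "f j0 + e \<noteq> 0"
  proof (cases "f j0 + d / 4 = 0")
    case True
    then show ?thesis using that[of "d / 8"] d_pos by auto
  next
    case False
    then show ?thesis using that[of "d / 4"] d_pos by auto
  qed
  define a where "a j = f j + (if j = j0 then e else 0)" for j
  have sum_a: "sum a v = sum f v + (if j0 \<in> v then e else 0)" for v
    by (simp add: a_def sum.distrib)
  have a_close: "sum f v \<le> sum a v" "sum a v \<le> sum f v + d / 4" for v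
    using e by (simp_all add: sum_a)
  have "a j0 \<noteq> 0" using e(3) by (simp add: a_def)
  moreover have "0 < (c0 - d / 2) + sum a v" if "0 < c0 + sum f v" for v
    using d_le[OF that] d_pos a_close[of v] by linarith
  moreover have "(c0 - d / 2) + sum a v < 0" if "\<not> 0 < c0 + sum f v" for v
    using that d_pos a_close[of v] by linarith
  ultimately show ?thesis unfolding slicing_def by blast
qed

lemma slicing_UNIV: "slicing UNIV"
  using slicing_Collect_affine_pos[of 1 "\<lambda>_. 0"] by simp

lemma slicing_active_sets: "slicing (active_sets x i)"
  unfolding active_sets_def hidden_input_def by (rule slicing_Collect_affine_pos)

lemma polyhedral_cone_dim_le_rank:
  fixes K :: "(real ^ ('n::finite set)) set"
  assumes "polyhedral_cone K" "K \<subseteq> tropical_RBM TYPE('k::finite)"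
  shows "\<exists>C :: 'k \<Rightarrow> 'n set set. (\<forall>i. slicing (C i)) \<and> dim K \<le> rank (rbm_matrix C)"
proof (cases "K = {}")
  case True
  then show ?thesis using slicing_UNIV by auto
next
  case False
  let ?F = "(\<lambda>C. range ((*v) (rbm_matrix C))) ` {C :: 'k \<Rightarrow> 'n set set. \<forall>i. slicing (C i)}"
  have "K \<subseteq> \<Union>?F"
    using assms(2) slicing_active_sets unfolding tropical_RBM_eq_range by blast
  moreover have "\<forall>V\<in>?F. subspace V"
    by (auto intro: linear_subspace_image[OF matrix_vector_mul_linear subspace_UNIV])
  moreover have "convex K" using assms(1) by (simp add: polyhedral_cone_def polyhedron_imp_convex)
  ultimately obtain C :: "'k \<Rightarrow> 'n set set" where "\<forall>i. slicing (C i)" "K \<subseteq> range ((*v) (rbm_matrix C))"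
    using convex_subset_finite_Union_subspaces[of ?F K] False by auto
  then show ?thesis by (metis dim_subset rank_dim_range)
qed

lemma open_pattern_params: "open (pattern_params C)"
proof -
  have cont: "continuous_on UNIV (\<lambda>x. hidden_input x i v)" for i v
    by (intro linear_continuous_on linear_conv_bounded_linear[THEN iffD1] linear_hidden_input)
  have "pattern_params C
      = (\<Inter>i. \<Inter>v. {x. if v \<in> C i then 0 < hidden_input x i v else hidden_input x i v < 0})"
    by (auto simp: pattern_params_def)
  moreover have "open {x. if v \<in> C i then 0 < hidden_input x i v else hidden_input x i v < 0}" for i v
    using open_Collect_less[OF continuous_on_const cont] open_Collect_less[OF cont continuous_on_const]
    by (cases "v \<in> C i") simp_all
  ultimately show ?thesis by (simp add: open_INT)
qed

lemma pattern_params_nonempty: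
  fixes C :: "'k::finite \<Rightarrow> 'n::finite set set"
  assumes "\<forall>i. slicing (C i)"
  shows "pattern_params C \<noteq> {}"
proof -
  obtain a :: "'k \<Rightarrow> 'n \<Rightarrow> real" and a0 :: "'k \<Rightarrow> real"
    where "\<forall>i v. (v \<in> C i \<longrightarrow> 0 < a0 i + sum (a i) v) \<and> (v \<notin> C i \<longrightarrow> a0 i + sum (a i) v < 0)"
    using assms unfolding slicing_def choice_iff by blast
  then have "rbm_param a (\<lambda>_. 0) a0 \<in> pattern_params C"
    by (simp add: pattern_params_def hidden_input_rbm_param)
  then show ?thesis by blast
qed

lemma convex_cone_insert_zero_pattern_params: "convex_cone (insert 0 (pattern_params C))"
  unfolding convex_cone_iff
proof (intro conjI ballI allI impI)
  fix x y assume "x \<in> insert 0 (pattern_params C)" "y \<in> insert 0 (pattern_params C)"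
  then show "x + y \<in> insert 0 (pattern_params C)"
    by (auto simp: pattern_params_def linear_add[OF linear_hidden_input] linear_0[OF linear_hidden_input]
        intro: add_pos_pos add_neg_neg)
next
  fix x and c :: real assume "x \<in> insert 0 (pattern_params C)" "0 \<le> c"
  then show "c *\<^sub>R x \<in> insert 0 (pattern_params C)"
    by (cases "c = 0")
      (auto simp: pattern_params_def linear_scale[OF linear_hidden_input] mult_pos_neg)
qed simp

lemma active_sets_pattern_params: "x \<in> pattern_params C \<Longrightarrow> active_sets x = C"
  by (auto simp: pattern_params_def active_sets_def fun_eq_iff) (metis less_asym)+

lemma rank_rbm_matrix_realized_by_cone:
  fixes C :: "'k::finite \<Rightarrow> 'n::finite set set"
  assumes "\<forall>i. slicing (C i)"
  shows "\<exists>K :: (real ^ ('n set)) set.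
           rank (rbm_matrix C) = dim K \<and> polyhedral_cone K \<and> K \<subseteq> tropical_RBM TYPE('k)"
proof -
  let ?Q = "insert 0 (pattern_params C)"
  have "UNIV = affine hull pattern_params C"
    using pattern_params_nonempty[OF assms]
    by (simp add: affine_hull_nonempty_interior interior_open[OF open_pattern_params])
  also have "\<dots> \<subseteq> span (pattern_params C)" by (rule affine_hull_subset_span)
  also have "\<dots> \<subseteq> span ?Q" by (intro span_mono subset_insertI)
  finally have "span ?Q = UNIV" using top.extremum_unique by blast
  then obtain K where K: "polyhedral_cone K" "K \<subseteq> (*v) (rbm_matrix C) ` ?Q"
    "dim K = dim (range ((*v) (rbm_matrix C)))"
    by (rule polyhedral_cone_in_linear_image[OF matrix_vector_mul_linear
          convex_cone_insert_zero_pattern_params])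
  have "(*v) (rbm_matrix C) ` ?Q \<subseteq> tropical_RBM TYPE('k)"
  proof (rule image_subsetI)
    fix x assume "x \<in> ?Q"
    then have "rbm_matrix C *v x = rbm_matrix (active_sets x) *v x"
      using active_sets_pattern_params by auto
    then show "rbm_matrix C *v x \<in> tropical_RBM TYPE('k)"
      unfolding tropical_RBM_eq_range by (rule image_eqI) simp
  qed
  then show ?thesis using K by (intro exI[of _ K]) (auto simp: rank_dim_range)
qed

theorem theorem4p2:
  "cone_dimension (tropical_RBM TYPE('k::finite) :: (real ^ ('n::finite set)) set)
     = Max {rank (rbm_matrix C) | C :: 'k \<Rightarrow> 'n set set. \<forall>i. slicing (C i)}"
  unfolding cone_dimension_def
proof (rule Max_subset_cofinal_eq)
  show "{rank (rbm_matrix C) | C :: 'k \<Rightarrow> 'n set set. \<forall>i. slicing (C i)} \<noteq> {}"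
    by (simp add: slicing_UNIV exI[of _ "\<lambda>_. UNIV"])
  show "{rank (rbm_matrix C) | C :: 'k \<Rightarrow> 'n set set. \<forall>i. slicing (C i)}
      \<subseteq> {dim K | K :: (real ^ ('n set)) set. polyhedral_cone K \<and> K \<subseteq> tropical_RBM TYPE('k)}"
    using rank_rbm_matrix_realized_by_cone by blast
  show "\<forall>d\<in>{dim K | K :: (real ^ ('n set)) set. polyhedral_cone K \<and> K \<subseteq> tropical_RBM TYPE('k)}.
      \<exists>r\<in>{rank (rbm_matrix C) | C :: 'k \<Rightarrow> 'n set set. \<forall>i. slicing (C i)}. d \<le> r"
    using polyhedral_cone_dim_le_rank by blast
qed (rule finite_Collect_dim)

end
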